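(* Let $\lambda,\mathfrak{g}_s>0$ and let $\alpha$ be a positive real root of $\alpha^3-\lambda\alpha+\mathfrak{g}_s=0$ with $2\alpha^3>\mathfrak{g}_s$; set $\Sigma=\tfrac12\sqrt{4\alpha^2-2\mathfrak{g}_s/\alpha}>0$. For $T>0$ define $$Z_1(T)=\alpha+\frac{\Sigma^2}{\sinh(\Sigma T)\,[\Sigma\cosh(\Sigma T)+\alpha\sinh(\Sigma T)]},\qquad Z_0(T)=\frac{\mathfrak{g}_s}{2\alpha}\Big(1-\frac{\Sigma^2}{[\Sigma\cosh(\Sigma T)+\alpha\sinh(\Sigma T)]^2}\Big).$$ Then $Z_1(T)\to\alpha$ as $T\to\infty$, and for all $T>0$: $$Z_1'(T)=\lambda-Z_1(T)^2-2Z_0(T),\qquad Z_0'(T)=2Z_1(T)Z_0(T)-\mathfrak{g}_s,$$ $$Z_1'(T)=-\bar W(Z_1(T)),\qquad Z_0(T)=\mathfrak{g}_s\,W_{\lambda,\mathfrak{g}_s}(Z_1(T)),$$ where $\bar W(X)=(X-\alpha)\sqrt{(X+\alpha)^2-2\mathfrak{g}_s/\alpha}$ and $W_{\lambda,\mathfrak{g}_s}(X)=\dfrac{-(X^2-\lambda)+(X-\alpha)\sqrt{(X+\alpha)^2-2\mathfrak{g}_s/\alpha}}{2\mathfrak{g}_s}$ (positive square roots, $X>\alpha$).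
   Context: These functions are the continuum (scaling) limits of generating functions of labeled trees encoding quadrangulations with a weight $\mathfrak{g}=\mathfrak{g}_s\epsilon^3$ per local maximum of the distance labeling, with $g=\tfrac14(1-\lambda\epsilon^2)$ and distance $t=T/\epsilon$; the claim itself is an identity about the explicit functions above. *)

theory Defs
  imports Complex_Main
begin

definition Wbar :: "real \<Rightarrow> real \<Rightarrow> real \<Rightarrow> real" where
  "Wbar \<alpha> gs X = (X - \<alpha>) * sqrt ((X + \<alpha>)^2 - 2 * gs / \<alpha>)"

definition Wlg :: "real \<Rightarrow> real \<Rightarrow> real \<Rightarrow> real \<Rightarrow> real" where
  "Wlg lam \<alpha> gs X = (- (X^2 - lam) + (X - \<alpha>) * sqrt ((X + \<alpha>)^2 - 2 * gs / \<alpha>)) / (2 * gs)"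

end

theory Submission
  imports Defs "HOL-Real_Asymp.Real_Asymp"
begin

text \<open>Trading \<open>lam\<close> and \<open>gs\<close> for \<open>\<alpha>\<close> and \<open>\<Sigma>\<close>, via \<open>gs = 2\<alpha>(\<alpha>\<^sup>2 - \<Sigma>\<^sup>2)\<close> and
  \<open>lam = 3\<alpha>\<^sup>2 - 2\<Sigma>\<^sup>2\<close>, makes the Riccati system a family of identities between rational
  functions of \<open>sinh (\<Sigma> T)\<close> and \<open>cosh (\<Sigma> T)\<close>, which hold modulo \<open>cosh\<^sup>2 = 1 + sinh\<^sup>2\<close>.
  Writing \<open>Z1 = \<alpha> + \<Sigma>\<^sup>2/P\<close>, the denominator \<open>P\<close> satisfies a first-order algebraic equation
  whose square root gives \<open>Wbar\<close>; comparing the two resulting formulas for \<open>Z1'\<close> then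
  yields \<open>Z0 = gs * Wlg (Z1)\<close>.\<close>

definition hyp_den :: "real \<Rightarrow> real \<Rightarrow> real \<Rightarrow> real" where
  "hyp_den S a T = S * cosh (S * T) + a * sinh (S * T)"

definition riccati_Z1 :: "real \<Rightarrow> real \<Rightarrow> real \<Rightarrow> real" where
  "riccati_Z1 S a T = a + S^2 / (sinh (S * T) * hyp_den S a T)"

definition riccati_Z0 :: "real \<Rightarrow> real \<Rightarrow> real \<Rightarrow> real" where
  "riccati_Z0 S a T = (a^2 - S^2) * (1 - S^2 / (hyp_den S a T)^2)"

lemma cubic_root_parametrisation:
  fixes lam gs \<alpha> \<Sigma> :: real
  assumes "\<alpha> > 0" "\<alpha>^3 - lam * \<alpha> + gs = 0" "2 * \<alpha>^3 > gs"
    and "\<Sigma> = sqrt (4 * \<alpha>^2 - 2 * gs / \<alpha>) / 2"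
  shows "\<Sigma> > 0" "gs = 2 * \<alpha> * (\<alpha>^2 - \<Sigma>^2)" "lam = 3 * \<alpha>^2 - 2 * \<Sigma>^2"
proof -
  have "4 * \<alpha>^2 - 2 * gs / \<alpha> = (4 * \<alpha>^3 - 2 * gs) / \<alpha>"
    using assms(1) by (simp add: field_simps power2_eq_square power3_eq_cube)
  with assms(1,3) have pos: "4 * \<alpha>^2 - 2 * gs / \<alpha> > 0"
    by simp
  then show "\<Sigma> > 0"
    unfolding assms(4) by simp
  have "\<Sigma>^2 = \<alpha>^2 - gs / (2 * \<alpha>)"
    unfolding assms(4) using pos by (simp add: power_divide)
  then show gs: "gs = 2 * \<alpha> * (\<alpha>^2 - \<Sigma>^2)"
    using assms(1) by (simp add: field_simps)
  have "lam * \<alpha> = (3 * \<alpha>^2 - 2 * \<Sigma>^2) * \<alpha>"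
    using assms(2) unfolding gs by (simp add: algebra_simps power2_eq_square power3_eq_cube)
  then show "lam = 3 * \<alpha>^2 - 2 * \<Sigma>^2"
    using assms(1) by simp
qed

lemma riccati_Z1_identity:
  fixes S a s c :: real
  defines "D \<equiv> S * c + a * s"
  assumes "c^2 = 1 + s^2" "s \<noteq> 0" "D \<noteq> 0"
  shows "- (S^3 * (c * D + s * (S * s + a * c))) / (s * D)^2
    = (3 * a^2 - 2 * S^2) - (a + S^2 / (s * D))^2 - 2 * ((a^2 - S^2) * (1 - S^2 / D^2))"
  using assms(2-) by (simp add: field_simps) (algebra add: D_def)

lemma riccati_Z0_identity:
  fixes S a s c :: real
  defines "D \<equiv> S * c + a * s"
  assumes "c^2 = 1 + s^2" "s \<noteq> 0" "D \<noteq> 0"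
  shows "(a^2 - S^2) * (2 * S^3 * (S * s + a * c) / D^3)
    = 2 * (a + S^2 / (s * D)) * ((a^2 - S^2) * (1 - S^2 / D^2)) - 2 * a * (a^2 - S^2)"
  using assms(2-) by (simp add: field_simps) (algebra add: D_def)

text \<open>With \<open>s = sinh (S T)\<close>, \<open>c = cosh (S T)\<close>, the left-hand side is \<open>P'\<^sup>2\<close> for
  \<open>P = sinh (S T) * hyp_den S a T\<close>; this turns the square root in \<open>Wbar\<close> into \<open>P'/P\<close>.\<close>

lemma riccati_first_integral:
  fixes S a s c :: real
  defines "P \<equiv> s * (S * c + a * s)"
  assumes "c^2 = 1 + s^2"
  shows "(S * (c * (S * c + a * s) + s * (S * s + a * c)))^2
    = S^2 * (S^2 + 4 * a * P + 4 * P^2)"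
  using assms(2) unfolding P_def by algebra

lemma hyp_den_pos:
  assumes "S > 0" "a \<ge> 0" "T \<ge> 0"
  shows "hyp_den S a T > 0"
proof -
  have "sinh (S * T) \<ge> 0" using assms by simp
  then show ?thesis
    unfolding hyp_den_def using assms(1,2) by (simp add: add_pos_nonneg)
qed

lemma has_real_derivative_hyp_den:
  "(hyp_den S a has_real_derivative S * (S * sinh (S * T) + a * cosh (S * T))) (at T)"
  unfolding hyp_den_def[abs_def]
  by (auto intro!: derivative_eq_intros simp: algebra_simps)

lemma riccati_Z1_tendsto:
  assumes "S > 0" "a \<ge> 0"
  shows "(riccati_Z1 S a \<longlongrightarrow> a) at_top"
  unfolding riccati_Z1_def[abs_def] hyp_den_def using assms by real_asymp

lemma riccati_Z1_has_derivative_quotient: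
  fixes S a T :: real
  defines "s \<equiv> sinh (S * T)" and "c \<equiv> cosh (S * T)" and "D \<equiv> hyp_den S a T"
  assumes "s * D \<noteq> 0"
  shows "(riccati_Z1 S a has_real_derivative
            - (S^3 * (c * D + s * (S * s + a * c))) / (s * D)^2) (at T)"
  unfolding riccati_Z1_def[abs_def] using assms
  by (auto intro!: derivative_eq_intros has_real_derivative_hyp_den
           simp: power2_eq_square power3_eq_cube algebra_simps)

lemma riccati_Z0_has_derivative_quotient:
  fixes S a T :: real
  defines "s \<equiv> sinh (S * T)" and "c \<equiv> cosh (S * T)" and "D \<equiv> hyp_den S a T"
  assumes "D \<noteq> 0"
  shows "(riccati_Z0 S a has_real_derivative
            (a^2 - S^2) * (2 * S^3 * (S * s + a * c) / D^3)) (at T)"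
  unfolding riccati_Z0_def[abs_def] using assms
  by (auto intro!: derivative_eq_intros has_real_derivative_hyp_den
           simp: field_simps power2_eq_square power3_eq_cube)

lemma riccati_Z1_has_derivative:
  assumes "sinh (S * T) \<noteq> 0" "hyp_den S a T \<noteq> 0"
  shows "(riccati_Z1 S a has_real_derivative
            (3 * a^2 - 2 * S^2) - (riccati_Z1 S a T)^2 - 2 * riccati_Z0 S a T) (at T)"
proof -
  have "- (S^3 * (cosh (S * T) * hyp_den S a T
                  + sinh (S * T) * (S * sinh (S * T) + a * cosh (S * T))))
          / (sinh (S * T) * hyp_den S a T)^2
        = (3 * a^2 - 2 * S^2) - (riccati_Z1 S a T)^2 - 2 * riccati_Z0 S a T"
    unfolding riccati_Z1_def riccati_Z0_def hyp_den_def
    by (rule riccati_Z1_identity) (use assms in \<open>simp_all add: hyp_den_def cosh_square_eq\<close>)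
  with riccati_Z1_has_derivative_quotient[of S T a] assms show ?thesis
    by simp
qed

lemma riccati_Z0_has_derivative:
  assumes "sinh (S * T) \<noteq> 0" "hyp_den S a T \<noteq> 0"
  shows "(riccati_Z0 S a has_real_derivative
            2 * riccati_Z1 S a T * riccati_Z0 S a T - 2 * a * (a^2 - S^2)) (at T)"
proof -
  have "(a^2 - S^2) * (2 * S^3 * (S * sinh (S * T) + a * cosh (S * T)) / (hyp_den S a T)^3)
        = 2 * riccati_Z1 S a T * riccati_Z0 S a T - 2 * a * (a^2 - S^2)"
    unfolding riccati_Z1_def riccati_Z0_def hyp_den_def
    by (rule riccati_Z0_identity) (use assms in \<open>simp_all add: hyp_den_def cosh_square_eq\<close>)
  with riccati_Z0_has_derivative_quotient[of S a T] assms show ?thesis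
    by simp
qed

lemma riccati_Z1_has_derivative_sqrt:
  assumes "S > 0" "a \<ge> 0" "T > 0"
  shows "(riccati_Z1 S a has_real_derivative
            - ((riccati_Z1 S a T - a) * sqrt ((riccati_Z1 S a T + a)^2 - 4 * (a^2 - S^2)))) (at T)"
proof -
  define s c D where "s = sinh (S * T)" and "c = cosh (S * T)" and "D = hyp_den S a T"
  define P P' where "P = s * D" and "P' = S * (c * D + s * (S * s + a * c))"
  have "s > 0" "c > 0" "D > 0"
    using assms hyp_den_pos[of S a T] unfolding s_def c_def D_def by simp_all
  then have "P > 0" "P' > 0"
    unfolding P_def P'_def using assms by (simp_all add: add_pos_nonneg)
  have Z1: "riccati_Z1 S a T = a + S^2 / P"
    unfolding riccati_Z1_def P_def s_def D_def ..
  have "P'^2 = S^2 * (S^2 + 4 * a * P + 4 * P^2)"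
    unfolding P'_def P_def D_def hyp_den_def s_def c_def
    by (rule riccati_first_integral) (simp add: cosh_square_eq)
  then have "(riccati_Z1 S a T + a)^2 - 4 * (a^2 - S^2) = (P' / P)^2"
    unfolding Z1 using \<open>P > 0\<close> by (simp add: field_simps power2_eq_square)
  then have "sqrt ((riccati_Z1 S a T + a)^2 - 4 * (a^2 - S^2)) = P' / P"
    using \<open>P > 0\<close> \<open>P' > 0\<close> by simp
  moreover have "(riccati_Z1 S a has_real_derivative - (S^2 * P') / P^2) (at T)"
    using riccati_Z1_has_derivative_quotient[of S T a, folded s_def c_def D_def P_def] \<open>P > 0\<close>
    unfolding P'_def by (simp add: power3_eq_cube power2_eq_square mult.assoc)
  moreover have "- (S^2 * P') / P^2 = - ((riccati_Z1 S a T - a) * (P' / P))"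
    unfolding Z1 by (simp add: power2_eq_square)
  ultimately show ?thesis
    by simp
qed

lemma gs_mult_Wlg:
  assumes "gs \<noteq> 0"
  shows "gs * Wlg lam \<alpha> gs X = (lam - X^2 + Wbar \<alpha> gs X) / 2"
  unfolding Wlg_def Wbar_def using assms by (simp add: field_simps)

theorem mainTheorem9:
  fixes lam gs \<alpha> \<Sigma> :: real and Z1 Z0 :: "real \<Rightarrow> real"
  assumes "lam > 0" and "gs > 0" and "\<alpha> > 0"
    and "\<alpha>^3 - lam * \<alpha> + gs = 0" and "2 * \<alpha>^3 > gs"
    and \<Sigma>_def: "\<Sigma> = sqrt (4 * \<alpha>^2 - 2 * gs / \<alpha>) / 2"
    and Z1_def: "Z1 = (\<lambda>T. \<alpha> + \<Sigma>^2 / (sinh (\<Sigma> * T) * (\<Sigma> * cosh (\<Sigma> * T) + \<alpha> * sinh (\<Sigma> * T))))"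
    and Z0_def: "Z0 = (\<lambda>T. gs / (2 * \<alpha>) * (1 - \<Sigma>^2 / (\<Sigma> * cosh (\<Sigma> * T) + \<alpha> * sinh (\<Sigma> * T))^2))"
  shows "\<Sigma> > 0 \<and> (Z1 \<longlongrightarrow> \<alpha>) at_top \<and>
    (\<forall>T > 0.
       (Z1 has_real_derivative (lam - (Z1 T)^2 - 2 * Z0 T)) (at T) \<and>
       (Z0 has_real_derivative (2 * Z1 T * Z0 T - gs)) (at T) \<and>
       (Z1 has_real_derivative (- Wbar \<alpha> gs (Z1 T))) (at T) \<and>
       Z0 T = gs * Wlg lam \<alpha> gs (Z1 T))"
proof -
  note params = cubic_root_parametrisation[OF assms(3-5) \<Sigma>_def]
  have Z1: "Z1 = riccati_Z1 \<Sigma> \<alpha>"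
    unfolding Z1_def riccati_Z1_def[abs_def] hyp_den_def ..
  have Z0: "Z0 = riccati_Z0 \<Sigma> \<alpha>"
    unfolding Z0_def riccati_Z0_def[abs_def] hyp_den_def params(2) using assms(3) by simp
  have Wbar: "Wbar \<alpha> gs X = (X - \<alpha>) * sqrt ((X + \<alpha>)^2 - 4 * (\<alpha>^2 - \<Sigma>^2))" for X
    unfolding Wbar_def params(2) using assms(3) by simp
  have "(Z1 has_real_derivative (lam - (Z1 T)^2 - 2 * Z0 T)) (at T) \<and>
        (Z0 has_real_derivative (2 * Z1 T * Z0 T - gs)) (at T) \<and>
        (Z1 has_real_derivative (- Wbar \<alpha> gs (Z1 T))) (at T) \<and>
        Z0 T = gs * Wlg lam \<alpha> gs (Z1 T)" if "T > 0" for T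
  proof -
    have nonzero: "sinh (\<Sigma> * T) \<noteq> 0" "hyp_den \<Sigma> \<alpha> T \<noteq> 0"
      using params(1) assms(3) \<open>T > 0\<close> hyp_den_pos[of \<Sigma> \<alpha> T] by simp_all
    have riccati: "(Z1 has_real_derivative (lam - (Z1 T)^2 - 2 * Z0 T)) (at T)"
      "(Z0 has_real_derivative (2 * Z1 T * Z0 T - gs)) (at T)"
      using riccati_Z1_has_derivative[OF nonzero] riccati_Z0_has_derivative[OF nonzero]
      unfolding Z1 Z0 params(2,3) by simp_all
    have W: "(Z1 has_real_derivative (- Wbar \<alpha> gs (Z1 T))) (at T)"
      using riccati_Z1_has_derivative_sqrt[OF params(1) _ \<open>T > 0\<close>, of \<alpha>] assms(3)
      unfolding Z1 Wbar by simp
    from DERIV_unique[OF riccati(1) W] have "Z0 T = gs * Wlg lam \<alpha> gs (Z1 T)"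
      unfolding gs_mult_Wlg[OF less_imp_neq[OF assms(2), symmetric]] by simp
    with riccati W show ?thesis
      by simp
  qed
  moreover have "(Z1 \<longlongrightarrow> \<alpha>) at_top"
    unfolding Z1 using riccati_Z1_tendsto params(1) assms(3) by simp
  ultimately show ?thesis
    using params(1) by blast
qed

end
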